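(* Let $n\ge 5$. If there exists a listing $\pi_0,\ldots,\pi_{n!-1}$ of all permutations of $\{1,\ldots,n\}$ (written as words) such that consecutive permutations differ by interchanging the symbols in two adjacent positions and $\pi_{i+n!/2}$ is the reversal of $\pi_i$ for all $0\le i<n!/2$, then $n\equiv 0$ or $1 \pmod 4$.
   Context: The reversal of a word $a_1a_2\cdots a_n$ is $a_na_{n-1}\cdots a_1$. *)

theory Defs
  imports Main
begin

definition perm_words :: "nat \<Rightarrow> nat list set" where
  "perm_words n = {xs. length xs = n \<and> distinct xs \<and> set xs = {1..n}}"

definition adj_transp :: "nat list \<Rightarrow> nat list \<Rightarrow> bool" where
  "adj_transp xs ys \<longleftrightarrow>
     (\<exists>j. Suc j < length xs \<and> ys = xs[j := xs ! Suc j, Suc j := xs ! j])"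

end

theory Submission
  imports Defs
begin

text \<open>An adjacent transposition changes the number of inversions of a word by exactly one, so
  along the listing the inversion number of \<open>\<pi>\<^sub>i\<close> changes parity at every step. Since \<open>4\<close> divides
  \<open>n!\<close>, the index \<open>n!/2\<close> is even, hence \<open>\<pi>\<^sub>0\<close> and its reversal have inversion numbers of equal
  parity. Every pair of positions is an inversion of exactly one of the two words, so these
  inversion numbers add up to \<open>n choose 2\<close>, which is therefore even; that happens exactly when
  \<open>n \<equiv> 0, 1 (mod 4)\<close>.\<close>

fun inversions :: "'a::linorder list \<Rightarrow> nat" where
  "inversions [] = 0"
| "inversions (x # xs) = length (filter (\<lambda>y. y < x) xs) + inversions xs"

lemma inversions_append:
  "inversions (xs @ ys) =
     inversions xs + inversions ys + (\<Sum>x\<leftarrow>xs. length (filter (\<lambda>y. y < x) ys))"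
  by (induction xs) auto

lemma inversions_snoc: "inversions (xs @ [x]) = inversions xs + length (filter (\<lambda>y. x < y) xs)"
proof -
  have "(\<Sum>y\<leftarrow>xs. length (filter (\<lambda>z. z < y) [x])) = length (filter (\<lambda>y. x < y) xs)"
    by (induction xs) auto
  then show ?thesis by (simp add: inversions_append)
qed

lemma Suc_choose_two: "Suc n choose 2 = (n choose 2) + n"
  by (metis Suc_1 binomial_Suc_Suc choose_one add.commute)

lemma inversions_add_inversions_rev:
  "distinct xs \<Longrightarrow> inversions xs + inversions (rev xs) = length xs choose 2"
proof (induction xs)
  case Nil
  then show ?case by simp
next
  case (Cons x xs)
  have "filter (\<lambda>y. x < y) xs = filter (\<lambda>y. \<not> y < x) xs"
    using Cons.prems by (intro filter_cong) (auto simp: not_less le_less)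
  then have "length (filter (\<lambda>y. y < x) xs) + length (filter (\<lambda>y. x < y) xs) = length xs"
    by (simp add: sum_length_filter_compl)
  then have "inversions (x # xs) + inversions (rev (x # xs)) =
             inversions xs + inversions (rev xs) + length xs"
    by (simp add: inversions_snoc rev_filter[symmetric])
  also have "\<dots> = (length xs choose 2) + length xs"
    using Cons by simp
  also have "\<dots> = length (x # xs) choose 2"
    by (simp only: length_Cons Suc_choose_two)
  finally show ?case .
qed

lemma inversions_swap_adjacent:
  assumes "a \<noteq> b"
  shows "odd (inversions (as @ a # b # bs) + inversions (as @ b # a # bs))"
proof -
  have same_prefix_term: "(\<Sum>x\<leftarrow>as. length (filter (\<lambda>y. y < x) (a # b # bs))) =
                          (\<Sum>x\<leftarrow>as. length (filter (\<lambda>y. y < x) (b # a # bs)))"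
    by (induction as) auto
  have "inversions (as @ a # b # bs) + inversions (as @ b # a # bs) =
        inversions (a # b # bs) + inversions (b # a # bs) +
        2 * (inversions as + (\<Sum>x\<leftarrow>as. length (filter (\<lambda>y. y < x) (a # b # bs))))"
    unfolding inversions_append same_prefix_term by simp
  moreover have "odd (inversions (a # b # bs) + inversions (b # a # bs))"
    using assms by (cases "a < b") auto
  ultimately show ?thesis
    by (simp del: inversions.simps)
qed

lemma adj_transp_odd_inversions:
  assumes "distinct xs" and "adj_transp xs ys"
  shows "odd (inversions xs + inversions ys)"
proof -
  obtain j where j: "Suc j < length xs" and ys: "ys = xs[j := xs ! Suc j, Suc j := xs ! j]"
    using assms(2) unfolding adj_transp_def by blast
  define as bs where "as = take j xs" and "bs = drop (Suc (Suc j)) xs"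
  have xs_split: "xs = as @ xs ! j # xs ! Suc j # bs"
    unfolding as_def bs_def using j by (simp add: Cons_nth_drop_Suc)
  have "length as = j"
    unfolding as_def using j by simp
  moreover have "ys = (as @ xs ! j # xs ! Suc j # bs)[j := xs ! Suc j, Suc j := xs ! j]"
    using ys xs_split by simp
  ultimately have ys_split: "ys = as @ xs ! Suc j # xs ! j # bs"
    by (simp add: list_update_append)
  have "xs ! j \<noteq> xs ! Suc j"
    using assms(1) j by (simp add: nth_eq_iff_index_eq)
  then show ?thesis
    using inversions_swap_adjacent xs_split ys_split by metis
qed

lemma adj_transp_walk_inversions_parity:
  assumes "\<And>i. i < k \<Longrightarrow> distinct (L i) \<and> adj_transp (L i) (L (Suc i))"
  shows "even (inversions (L 0) + inversions (L k)) \<longleftrightarrow> even k"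
  using assms
proof (induction k)
  case 0
  then show ?case by simp
next
  case (Suc k)
  have "odd (inversions (L k) + inversions (L (Suc k)))"
    using Suc.prems adj_transp_odd_inversions by blast
  then show ?case
    using Suc by auto
qed

lemma choose_two_add_four: "(n + 4) choose 2 = (n choose 2) + 2 * (2 * n + 3)"
proof -
  have "n + 4 = Suc (Suc (Suc (Suc n)))" by simp
  then show ?thesis by (simp only: Suc_choose_two) simp
qed

lemma even_choose_two_iff: "even (n choose 2) \<longleftrightarrow> n mod 4 = 0 \<or> n mod 4 = 1"
proof (induction n rule: less_induct)
  case (less n)
  show ?case
  proof (cases "n < 4")
    case True
    then consider "n = 0" | "n = 1" | "n = 2" | "n = 3" by linarith
    then show ?thesis by cases (simp_all add: choose_two)
  next
    case False
    then obtain m where "n = m + 4"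
      using le_add_diff_inverse2 by (metis not_less)
    then show ?thesis
      using less[of m] by (simp add: choose_two_add_four)
  qed
qed

theorem proposition2:
  fixes n :: nat and L :: "nat \<Rightarrow> nat list"
  assumes "n \<ge> 5"
    and "bij_betw L {..<fact n} (perm_words n)"
    and "\<forall>i. Suc i < fact n \<longrightarrow> adj_transp (L i) (L (Suc i))"
    and "\<forall>i. i < fact n div 2 \<longrightarrow> L (i + fact n div 2) = rev (L i)"
  shows "n mod 4 = 0 \<or> n mod 4 = 1"
proof -
  define h where "h = fact n div (2::nat)"
  have perm_word: "distinct (L i) \<and> length (L i) = n" if "i < fact n" for i
    using bij_betw_apply[OF assms(2)] that unfolding perm_words_def by auto
  have "4 dvd (fact n :: nat)"
    using assms(1) by (intro dvd_fact) simp_all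
  then obtain k :: nat where "fact n = 4 * k" ..
  moreover have "0 < (fact n :: nat)"
    by simp
  ultimately have "even h" and "0 < h" and "h < fact n"
    unfolding h_def by simp_all
  have walk: "distinct (L i) \<and> adj_transp (L i) (L (Suc i))" if "i < h" for i
    using that \<open>h < fact n\<close> perm_word[of i] assms(3) by simp
  have "L h = rev (L 0)"
    using assms(4) \<open>0 < h\<close> unfolding h_def by (metis add_0)
  moreover have "even (inversions (L 0) + inversions (L h))"
    using adj_transp_walk_inversions_parity[of h L, OF walk] \<open>even h\<close> by simp
  moreover have "inversions (L 0) + inversions (rev (L 0)) = n choose 2"
    using inversions_add_inversions_rev[of "L 0"] perm_word[of 0] \<open>0 < fact n\<close> by simp
  ultimately show ?thesis
    by (simp add: even_choose_two_iff)
qed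

end
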